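(* Let $c>0$, $0<\delta<1$, $M\ge1$ and let $\chi:\mathbb R\to\mathbb R$ satisfy $\chi(t)=ct$ for every $t\ge-\delta$ and $\chi|_{(-\infty,0]}\in\widetilde{\mathcal W}^-\cup\mathcal W^+_M$. Let $g$ be a smooth function on $\mathbb R$ supported in $[-1,1]$ with $g(t)=g(-t)$, $0\le g\le1$, $\int_{\mathbb R}g=1$; put $g_\epsilon(t)=\epsilon^{-1}g(t/\epsilon)$ and $\chi_\epsilon=\chi*g_\epsilon$ for $\epsilon>0$. Then: (i) if $\chi|_{(-\infty,0]}\in\widetilde{\mathcal W}^-$, then $\chi_\epsilon|_{(-\infty,0]}\in\widetilde{\mathcal W}^-$ for every $0<\epsilon<\delta$, $\chi_\epsilon\searrow\chi$ as $\epsilon\searrow0$, and $\sup(\chi_\epsilon-\chi)\le c\epsilon$; (ii) if $\chi|_{(-\infty,0]}\in\mathcal W^+_M$ and $0<\epsilon<\delta^2/2$, then $\chi_\epsilon|_{(-\infty,0]}\in\mathcal W^+_{M/(1-\delta)}$; moreover, if $0<\epsilon<\delta^2/8$, then $\overline\chi_\epsilon:=\chi_\epsilon(\cdot+\epsilon)-c\epsilon$ satisfies $\overline\chi_\epsilon|_{(-\infty,0]}\in\mathcal W^+_{M/(1-\delta)^2}$ and $\overline\chi_\epsilon\ge\chi-c\epsilon$, and $\overline\chi_\epsilon\to\chi$ uniformly on compact subsets of $\mathbb R$ as $\epsilon\to0$.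
   Context: $\widetilde{\mathcal W}^-$: convex non-decreasing $\chi:\mathbb R_{\le0}\to\mathbb R_{\le0}$, $\chi(0)=0$, $\chi\not\equiv0$. $\mathcal W^+_M$: increasing concave $\chi:\mathbb R_{\le0}\to\mathbb R_{\le0}$, $\chi(0)=0$, $\chi<0$ on $(-\infty,0)$, $|t\chi'(t)|\le M|\chi(t)|$ for $t\le0$. *)

theory Defs
  imports "HOL-Analysis.Analysis"
begin

definition smooth_real :: "(real \<Rightarrow> real) \<Rightarrow> bool" where
  "smooth_real g \<longleftrightarrow>
     (\<forall>k::nat. \<forall>x. (((deriv ^^ k) g) has_real_derivative ((deriv ^^ Suc k) g x)) (at x))"

definition Wminus_tilde :: "(real \<Rightarrow> real) \<Rightarrow> bool" where
  "Wminus_tilde \<phi> \<longleftrightarrow>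
     convex_on {..0} \<phi> \<and> mono_on {..0} \<phi> \<and> (\<forall>t\<le>0. \<phi> t \<le> 0) \<and> \<phi> 0 = 0
     \<and> (\<exists>t\<le>0. \<phi> t \<noteq> 0)"

text \<open>The class W-plus-M (only the restriction of chi to t <= 0 matters).
  The derivative condition is imposed at every t < 0 where chi is differentiable
  (at t = 0 it is trivial since t = 0).\<close>
definition Wplus :: "real \<Rightarrow> (real \<Rightarrow> real) \<Rightarrow> bool" where
  "Wplus M \<phi> \<longleftrightarrow>
     concave_on {..0} \<phi> \<and> mono_on {..0} \<phi> \<and> (\<forall>t\<le>0. \<phi> t \<le> 0) \<and> \<phi> 0 = 0
     \<and> (\<forall>t<0. \<phi> t < 0)
     \<and> (\<forall>t<0. \<forall>D. (\<phi> has_real_derivative D) (at t) \<longrightarrow> \<bar>t * D\<bar> \<le> M * \<bar>\<phi> t\<bar>)"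

definition kernel_eps :: "(real \<Rightarrow> real) \<Rightarrow> real \<Rightarrow> real \<Rightarrow> real" where
  "kernel_eps g \<epsilon> t = g (t / \<epsilon>) / \<epsilon>"

definition conv :: "(real \<Rightarrow> real) \<Rightarrow> (real \<Rightarrow> real) \<Rightarrow> real \<Rightarrow> real" where
  "conv f h t = integral UNIV (\<lambda>s. f (t - s) * h s)"

end

(*
  Mollification only averages chi over [t - eps, t + eps]: it keeps chi_eps linear near 0 and
  preserves convexity, concavity and monotonicity. For convex chi the symmetric sums
  chi (t - a) + chi (t + a) increase with a, so chi_eps increases with eps, and the chord slopes
  of chi are at most c, so chi_eps - chi <= c eps.

  In the class W+_M the bound |t chi'(t)| <= M |chi t| is imposed only where chi is
  differentiable. Since a concave function is differentiable on a dense set, it integrates to the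
  bound (-t) (chi t - chi (t - h)) <= M h (-chi (t - h)) on backward increments. This bound
  survives averaging, with M replaced by M / (1 - delta), at every t with eps <= delta |t|,
  because every averaged point u then has |u| >= (1 - delta) |t|; at points of differentiability
  of chi_eps it turns back into the derivative bound. All other t < 0 lie where chi_eps is linear.
  The shift by eps costs another factor 1 / (1 - delta) in the same way.
*)
theory Submission
  imports Defs
begin

section \<open>Chord slopes and gluing of convex functions\<close>

definition chord_slope :: "(real \<Rightarrow> real) \<Rightarrow> real \<Rightarrow> real \<Rightarrow> real" where
  "chord_slope f x y = (f y - f x) / (y - x)"

lemma chord_slope_min_max:
  assumes "x < y" "y < z"
  shows "min (chord_slope f x y) (chord_slope f y z) \<le> chord_slope f x z"
    and "chord_slope f x z \<le> max (chord_slope f x y) (chord_slope f y z)"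
proof -
  have split: "(z - x) * chord_slope f x z = (y - x) * chord_slope f x y + (z - y) * chord_slope f y z"
    using assms by (simp add: chord_slope_def)
  let ?m = "min (chord_slope f x y) (chord_slope f y z)"
  let ?M = "max (chord_slope f x y) (chord_slope f y z)"
  have "(z - x) * ?m = (y - x) * ?m + (z - y) * ?m"
    by (simp add: algebra_simps)
  also have "\<dots> \<le> (z - x) * chord_slope f x z"
    unfolding split using assms by (intro add_mono mult_left_mono) auto
  finally show "?m \<le> chord_slope f x z"
    using assms by (simp add: mult_le_cancel_left)
  have "(z - x) * chord_slope f x z \<le> (y - x) * ?M + (z - y) * ?M"
    unfolding split using assms by (intro add_mono mult_left_mono) auto
  also have "\<dots> = (z - x) * ?M"
    by (simp add: algebra_simps)
  finally show "chord_slope f x z \<le> ?M"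
    using assms by (simp add: mult_le_cancel_left)
qed

lemma convex_on_chord_slope_le:
  fixes f :: "real \<Rightarrow> real"
  assumes "convex_on S f" "x \<in> S" "z \<in> S" "x < y" "y < z"
  shows "chord_slope f x y \<le> chord_slope f x z"
    and "chord_slope f x z \<le> chord_slope f y z"
    and "chord_slope f x y \<le> chord_slope f y z"
proof -
  have swap: "(f u - f v) / (u - v) = chord_slope f u v" for u v
    unfolding chord_slope_def by (metis minus_diff_eq minus_divide_divide)
  show 1: "chord_slope f x y \<le> chord_slope f x z"
    using convex_on_slope_le(1)[OF assms] by (simp add: swap)
  show 2: "chord_slope f x z \<le> chord_slope f y z"
    using convex_on_slope_le(2)[OF assms] by (simp add: swap)
  from 1 2 show "chord_slope f x y \<le> chord_slope f y z" by (rule order_trans)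
qed

lemma convex_on_UNIV_chord_slopeI:
  fixes f :: "real \<Rightarrow> real"
  assumes "\<And>x y z. x < y \<Longrightarrow> y < z \<Longrightarrow> chord_slope f x y \<le> chord_slope f y z"
  shows "convex_on UNIV f"
proof (rule convex_on_linorderI)
  fix t x y :: real assume t: "0 < t" "t < 1" and "x < y"
  define z where "z = (1 - t) * x + t * y"
  have zx: "z - x = t * (y - x)" and yz: "y - z = (1 - t) * (y - x)"
    by (simp_all add: z_def algebra_simps)
  have "0 < t * (y - x)" "0 < (1 - t) * (y - x)"
    using t \<open>x < y\<close> by simp_all
  then have "x < z" "z < y"
    unfolding zx[symmetric] yz[symmetric] by simp_all
  then have "(f z - f x) / (t * (y - x)) \<le> (f y - f z) / ((1 - t) * (y - x))"
    using assms[of x z y] unfolding chord_slope_def zx yz by simp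
  then have "(f z - f x) * (1 - t) \<le> (f y - f z) * t"
    using t \<open>x < y\<close> by (simp add: divide_simps)
  then have "f z \<le> (1 - t) * f x + t * f y"
    by (simp add: algebra_simps)
  then show "f ((1 - t) *\<^sub>R x + t *\<^sub>R y) \<le> (1 - t) * f x + t * f y"
    by (simp add: z_def)
qed simp

lemma convex_on_glue_straddling:
  fixes f :: "real \<Rightarrow> real"
  assumes left: "convex_on {..b} f" and right: "convex_on {a..} f" and "a < b"
    and xy: "x < y" and yz: "y < z" and "x < a" "b < z"
  shows "chord_slope f x y \<le> chord_slope f y z"
proof -
  note L = convex_on_chord_slope_le[OF left] and R = convex_on_chord_slope_le[OF right]
  show ?thesis
  proof (cases "y < b")
    case True
    define p where "p = (2 * max a y + b) / 3"
    define q where "q = (max a y + 2 * b) / 3"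
    have pq: "y < p" "a < p" "p < q" "q < b"
      using True \<open>a < b\<close> by (auto simp: p_def q_def max_def)
    have xy_yp: "chord_slope f x y \<le> chord_slope f y p"
      using L(3)[OF _ _ xy, of p] pq xy by simp
    have "chord_slope f x y \<le> chord_slope f y q"
      using xy_yp L(1)[of y q p] pq by simp
    moreover have "chord_slope f y p \<le> chord_slope f p q"
      using L(3)[of y q p] pq by simp
    moreover have "chord_slope f p q \<le> chord_slope f q z"
      using R(3)[of p z q] pq \<open>b < z\<close> by simp
    ultimately show ?thesis
      using xy_yp chord_slope_min_max(1)[of y q z f] pq \<open>b < z\<close> by linarith
  next
    case False
    define p where "p = (2 * a + b) / 3"
    define q where "q = (a + 2 * b) / 3"
    have pq: "x < p" "a < p" "p < q" "q < b"
      using \<open>x < a\<close> \<open>a < b\<close> by (auto simp: p_def q_def)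
    have py_yz: "chord_slope f p y \<le> chord_slope f y z"
      using R(3)[of p z y] pq False yz by simp
    have "chord_slope f x p \<le> chord_slope f p q"
      using L(3)[of x q p] pq by simp
    moreover have "chord_slope f p q \<le> chord_slope f q y"
      using R(3)[of p y q] pq False by simp
    moreover have "chord_slope f q y \<le> chord_slope f y z"
      using R(3)[of q z y] pq False yz by simp
    ultimately show ?thesis
      using py_yz chord_slope_min_max(2)[of x p y f] pq False by linarith
  qed
qed

lemma convex_on_glue:
  fixes f :: "real \<Rightarrow> real"
  assumes left: "convex_on {..b} f" and right: "convex_on {a..} f" and "a < b"
  shows "convex_on UNIV f"
proof (rule convex_on_UNIV_chord_slopeI)
  fix x y z :: real assume xy: "x < y" and yz: "y < z"
  consider "z \<le> b" | "a \<le> x" | "x < a" "b < z"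
    by linarith
  then show "chord_slope f x y \<le> chord_slope f y z"
  proof cases
    case 1
    then show ?thesis using convex_on_chord_slope_le(3)[OF left _ _ xy yz] xy yz by simp
  next
    case 2
    then show ?thesis using convex_on_chord_slope_le(3)[OF right _ _ xy yz] xy yz by simp
  next
    case 3
    then show ?thesis by (rule convex_on_glue_straddling[OF left right \<open>a < b\<close> xy yz])
  qed
qed

lemma convex_on_symmetric_sum_mono:
  fixes f :: "real \<Rightarrow> real"
  assumes f: "convex_on UNIV f" and "0 \<le> a" "a \<le> b"
  shows "f (t - a) + f (t + a) \<le> f (t - b) + f (t + b)"
proof (cases "b = 0")
  case False
  then have "0 < b" using assms by simp
  define l where "l = (b - a) / (2 * b)"
  have l: "0 \<le> l" "l \<le> 1" using assms \<open>0 < b\<close> by (auto simp: l_def field_simps)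
  have "(1 - l) *\<^sub>R (t - b) + l *\<^sub>R (t + b) = t - a" "(1 - l) *\<^sub>R (t + b) + l *\<^sub>R (t - b) = t + a"
    using \<open>0 < b\<close> by (simp_all add: l_def field_simps)
  then have "f (t - a) \<le> (1 - l) * f (t - b) + l * f (t + b)"
    and "f (t + a) \<le> (1 - l) * f (t + b) + l * f (t - b)"
    using convex_onD[OF f l] by (metis UNIV_I)+
  then show ?thesis by (simp add: algebra_simps)
qed (use assms in simp)

section \<open>Tangents and points of differentiability\<close>

lemma convex_on_tangent_le:
  fixes f :: "real \<Rightarrow> real"
  assumes f: "convex_on S f" and "w \<in> S" "y \<in> S" and D: "(f has_real_derivative D) (at w)"
  shows "f w + D * (y - w) \<le> f y"
proof -
  have "((\<lambda>k. w + k * (y - w)) has_real_derivative y - w) (at 0)"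
    by (auto intro!: derivative_eq_intros)
  then have "((\<lambda>k. f (w + k * (y - w))) has_real_derivative D * (y - w)) (at 0)"
    using DERIV_chain2[of f D "\<lambda>k. w + k * (y - w)" 0 "y - w"] D by simp
  then have "((\<lambda>k. (f (w + k * (y - w)) - f w) / k) \<longlongrightarrow> D * (y - w)) (at_right 0)"
    unfolding DERIV_def by (simp add: filterlim_at_split)
  moreover have "\<forall>\<^sub>F k in at_right 0. (f (w + k * (y - w)) - f w) / k \<le> f y - f w"
    unfolding eventually_at_right_field
  proof (intro exI[of _ 1] conjI allI impI)
    fix k :: real assume k: "0 < k" "k < 1"
    have "f ((1 - k) *\<^sub>R w + k *\<^sub>R y) \<le> (1 - k) * f w + k * f y"
      using convex_onD[OF f, of k w y] k assms(2,3) by simp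
    then have "f (w + k * (y - w)) - f w \<le> k * (f y - f w)"
      by (simp add: algebra_simps)
    then show "(f (w + k * (y - w)) - f w) / k \<le> f y - f w"
      using k by (simp add: divide_simps mult.commute)
  qed simp
  ultimately have "D * (y - w) \<le> f y - f w"
    by (rule tendsto_upperbound) simp
  then show ?thesis by simp
qed

lemma concave_on_tangent_ge:
  fixes f :: "real \<Rightarrow> real"
  assumes "concave_on S f" "w \<in> S" "y \<in> S" "(f has_real_derivative D) (at w)"
  shows "f y \<le> f w + D * (y - w)"
  using convex_on_tangent_le[of S "\<lambda>x. - f x" w y "- D"] assms
  by (simp add: concave_on_def DERIV_minus)

lemma concave_on_mono_deriv_nonneg:
  fixes f :: "real \<Rightarrow> real"
  assumes "concave_on UNIV f" "mono f" "(f has_real_derivative D) (at t)"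
  shows "0 \<le> D"
proof -
  have "f t \<le> f (t + 1)" by (rule monoD[OF assms(2)]) simp
  also have "\<dots> \<le> f t + D"
    using concave_on_tangent_ge[OF assms(1) UNIV_I UNIV_I assms(3), of "t + 1"] by simp
  finally show ?thesis by simp
qed

lemma concave_on_UNIV_continuous:
  fixes f :: "real \<Rightarrow> real"
  assumes "concave_on UNIV f"
  shows "continuous_on UNIV f" and "isCont f x"
proof -
  show cont: "continuous_on UNIV f"
    using convex_on_continuous[OF open_UNIV, of "\<lambda>x. - f x"] continuous_on_minus[of UNIV "\<lambda>x. - f x"]
      assms by (simp add: concave_on_def)
  then show "isCont f x"
    by (metis continuous_on_eq_continuous_at open_UNIV UNIV_I)
qed

lemma concave_on_UNIV_translate:
  fixes f :: "real \<Rightarrow> real"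
  assumes "concave_on UNIV f"
  shows "concave_on UNIV (\<lambda>t. f (t + a) + b)"
proof (rule concave_on_linorderI)
  fix u x y :: real assume "0 < u" "u < 1"
  then have "(1 - u) * f (x + a) + u * f (y + a) \<le> f ((1 - u) *\<^sub>R (x + a) + u *\<^sub>R (y + a))"
    using concave_onD[OF assms, of u "x + a" "y + a"] by simp
  then show "(1 - u) * (f (x + a) + b) + u * (f (y + a) + b) \<le> f ((1 - u) *\<^sub>R x + u *\<^sub>R y + a) + b"
    by (simp add: algebra_simps)
qed simp

definition right_slope :: "(real \<Rightarrow> real) \<Rightarrow> real \<Rightarrow> real" where
  "right_slope f w = Inf (chord_slope f w ` {w<..})"

lemma convex_on_right_slope_bounds:
  fixes f :: "real \<Rightarrow> real"
  assumes f: "convex_on UNIV f"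
  shows "y < w \<Longrightarrow> chord_slope f y w \<le> right_slope f w"
    and "w < x \<Longrightarrow> right_slope f w \<le> chord_slope f w x"
proof -
  note three_slope = convex_on_chord_slope_le(3)[OF f UNIV_I UNIV_I]
  show "chord_slope f y w \<le> right_slope f w" if "y < w"
    unfolding right_slope_def using that by (auto intro!: cInf_greatest three_slope)
  have "bdd_below (chord_slope f w ` {w<..})"
    by (rule bdd_belowI2[of _ "chord_slope f (w - 1) w"]) (auto intro: three_slope)
  then show "right_slope f w \<le> chord_slope f w x" if "w < x"
    unfolding right_slope_def using that by (auto intro: cInf_lower)
qed

lemma convex_on_mono_right_slope:
  fixes f :: "real \<Rightarrow> real"
  assumes f: "convex_on UNIV f"
  shows "mono (right_slope f)"
proof (rule monoI)
  fix u v :: real assume "u \<le> v"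
  then consider "u = v" | "u < v" by linarith
  then show "right_slope f u \<le> right_slope f v"
    by cases (auto dest: convex_on_right_slope_bounds[OF f] intro: order_trans)
qed

text \<open>The difference quotient at \<open>w\<close> with step \<open>k\<close> lies between \<open>right_slope f w\<close> and
  \<open>right_slope f (w + k)\<close>, so continuity of the right slope at \<open>w\<close> forces differentiability.\<close>
lemma convex_on_has_real_derivative_right_slope:
  fixes f :: "real \<Rightarrow> real"
  assumes f: "convex_on UNIV f" and cont: "isCont (right_slope f) w"
  shows "(f has_real_derivative right_slope f w) (at w)"
  unfolding DERIV_def
proof (rule LIM_zero_cancel, rule Lim_null_comparison)
  have "((\<lambda>k. right_slope f (w + k) - right_slope f w) \<longlongrightarrow> 0) (at 0)"
    using cont by (simp add: isCont_iff LIM_zero)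
  then show "((\<lambda>k. \<bar>right_slope f (w + k) - right_slope f w\<bar>) \<longlongrightarrow> 0) (at 0)"
    by (rule tendsto_rabs_zero)
  show "\<forall>\<^sub>F k in at 0. norm ((f (w + k) - f w) / k - right_slope f w)
                       \<le> \<bar>right_slope f (w + k) - right_slope f w\<bar>"
    unfolding eventually_at_filter
  proof (intro always_eventually allI impI)
    fix k :: real assume "k \<noteq> 0"
    then consider "0 < k" | "k < 0" by linarith
    then show "norm ((f (w + k) - f w) / k - right_slope f w) \<le> \<bar>right_slope f (w + k) - right_slope f w\<bar>"
    proof cases
      case 1
      then have "right_slope f w \<le> chord_slope f w (w + k)" "chord_slope f w (w + k) \<le> right_slope f (w + k)"
        by (simp_all add: convex_on_right_slope_bounds[OF f])
      then show ?thesis by (simp add: chord_slope_def)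
    next
      case 2
      then have "right_slope f (w + k) \<le> chord_slope f (w + k) w" "chord_slope f (w + k) w \<le> right_slope f w"
        by (simp_all add: convex_on_right_slope_bounds[OF f])
      moreover have "chord_slope f (w + k) w = (f (w + k) - f w) / k"
        unfolding chord_slope_def by (metis minus_diff_eq minus_divide_divide add_diff_cancel_left')
      ultimately show ?thesis by simp
    qed
  qed
qed

lemma convex_on_exists_real_derivative:
  fixes f :: "real \<Rightarrow> real"
  assumes f: "convex_on UNIV f" and "a < b"
  shows "\<exists>w D. a < w \<and> w < b \<and> (f has_real_derivative D) (at w)"
proof -
  have "countable {x. \<not> isCont (right_slope f) x}"
    by (rule mono_ctble_discont[OF convex_on_mono_right_slope[OF f]])
  then obtain w where "w \<in> {a<..<b}" "isCont (right_slope f) w"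
    using open_minus_countable[of "{x. \<not> isCont (right_slope f) x}" "{a<..<b}"] \<open>a < b\<close> by auto
  then show ?thesis
    using convex_on_has_real_derivative_right_slope[OF f] by auto
qed

lemma concave_on_exists_real_derivative:
  fixes f :: "real \<Rightarrow> real"
  assumes "concave_on UNIV f" "a < b"
  shows "\<exists>w D. a < w \<and> w < b \<and> (f has_real_derivative D) (at w)"
proof -
  obtain w D where "a < w" "w < b" "((\<lambda>x. - f x) has_real_derivative D) (at w)"
    using convex_on_exists_real_derivative[of "\<lambda>x. - f x" a b] assms by (auto simp: concave_on_def)
  then show ?thesis
    using DERIV_minus by fastforce
qed

section \<open>Functions that are linear near zero and the two classes\<close>

lemma convex_concave_on_linear_tail:
  fixes f :: "real \<Rightarrow> real"
  assumes lin: "\<forall>t\<ge>a. f t = c * t"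
  shows "convex_on {a..} f" and "concave_on {a..} f"
proof -
  have eq: "f ((1 - u) * x + u * y) = (1 - u) * f x + u * f y"
    if "0 \<le> u" "u \<le> 1" "x \<in> {a..}" "y \<in> {a..}" for u x y
  proof -
    have "(1 - u) * a + u * a \<le> (1 - u) * x + u * y"
      using that by (intro add_mono mult_left_mono) auto
    then show ?thesis
      using that lin by (simp add: algebra_simps)
  qed
  show "convex_on {a..} f"
    by (rule convex_onI) (auto simp: eq)
  show "concave_on {a..} f"
    by (rule concave_on_linorderI) (auto simp: eq)
qed

lemma mono_glue_linear_tail:
  fixes f :: "real \<Rightarrow> real"
  assumes mono: "mono_on {..0} f" and lin: "\<forall>t\<ge>-a. f t = c * t"
    and "0 < c" "0 < a"
  shows "mono f"
proof (rule monoI)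
  fix x y :: real assume "x \<le> y"
  consider "y \<le> 0" | "-a \<le> x" | "x < -a" "0 < y" by linarith
  then show "f x \<le> f y"
  proof cases
    case 1
    then show ?thesis using mono \<open>x \<le> y\<close> by (auto simp: mono_on_def)
  next
    case 2
    then show ?thesis using lin[rule_format, of x] lin[rule_format, of y] \<open>x \<le> y\<close> \<open>0 < c\<close> by simp
  next
    case 3
    then have "f x \<le> f (-a)" using mono \<open>0 < a\<close> by (auto simp: mono_on_def)
    also have "\<dots> \<le> f y"
      using lin[rule_format, of "-a"] lin[rule_format, of y] 3 \<open>0 < a\<close> mult_pos_pos[OF \<open>0 < c\<close> \<open>0 < a\<close>]
        mult_pos_pos[OF \<open>0 < c\<close>, of y] by simp
    finally show ?thesis .
  qed
qed

lemma convex_on_increment_le_linear_tail: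
  fixes f :: "real \<Rightarrow> real"
  assumes f: "convex_on UNIV f" and lin: "\<forall>t\<ge>a. f t = c * t" and "x < y"
  shows "f y - f x \<le> c * (y - x)"
proof -
  define z where "z = max y a + 1"
  note three_slope = convex_on_chord_slope_le(3)[OF f UNIV_I UNIV_I]
  have "chord_slope f x y \<le> chord_slope f y z"
    using three_slope \<open>x < y\<close> by (simp add: z_def)
  also have "\<dots> \<le> chord_slope f z (z + 1)"
    using three_slope by (simp add: z_def)
  also have "\<dots> = c"
    using lin[rule_format, of z] lin[rule_format, of "z + 1"] by (simp add: chord_slope_def z_def algebra_simps)
  finally show ?thesis
    using \<open>x < y\<close> by (simp add: chord_slope_def divide_le_eq)
qed

lemma neg_if_mono_linear_tail:
  fixes f :: "real \<Rightarrow> real"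
  assumes "mono f" and lin: "\<forall>t\<ge>-a. f t = c * t" and "0 < c" "0 < a" "t < 0"
  shows "f t < 0"
proof (cases "-a \<le> t")
  case True
  then show ?thesis using lin \<open>0 < c\<close> \<open>t < 0\<close> by (simp add: mult_pos_neg)
next
  case False
  then have "f t \<le> f (-a)" using monoD[OF \<open>mono f\<close>] by simp
  also have "\<dots> < 0" using lin \<open>0 < c\<close> \<open>0 < a\<close> by (simp add: mult_pos_neg)
  finally show ?thesis .
qed

lemma deriv_bound_linear_tail:
  fixes f :: "real \<Rightarrow> real"
  assumes lin: "\<forall>s\<ge>a. f s = c * s" and "a < t" "t < 0" "0 < c" "1 \<le> M"
    and D: "(f has_real_derivative D) (at t)"
  shows "(- t) * D \<le> M * (- f t)"
proof -
  have "((\<lambda>s. c * s) has_real_derivative c) (at t)"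
    by (auto intro!: derivative_eq_intros)
  then have "(f has_real_derivative c) (at t)"
    by (rule has_field_derivative_transform_within_open[of _ _ _ "{a<..}"]) (use assms in auto)
  then have "D = c" using D DERIV_unique by blast
  moreover have "0 \<le> - f t" using lin[rule_format, of t] assms by (simp add: mult_pos_neg less_imp_le)
  ultimately show ?thesis
    using lin[rule_format, of t] assms mult_right_mono[OF \<open>1 \<le> M\<close> \<open>0 \<le> - f t\<close>] by simp
qed

lemma convex_on_mono_if_Wminus_tilde:
  fixes \<phi> :: "real \<Rightarrow> real"
  assumes "Wminus_tilde \<phi>" and lin: "\<forall>t\<ge>-a. \<phi> t = c * t" and "0 < c" "0 < a"
  shows "convex_on UNIV \<phi>" and "mono \<phi>"
  using assms convex_on_glue[of 0 \<phi> "-a"] convex_concave_on_linear_tail(1)[OF lin]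
    mono_glue_linear_tail[OF _ lin] by (auto simp: Wminus_tilde_def)

lemma concave_on_mono_if_Wplus:
  fixes \<phi> :: "real \<Rightarrow> real"
  assumes "Wplus M \<phi>" and lin: "\<forall>t\<ge>-a. \<phi> t = c * t" and "0 < c" "0 < a"
  shows "concave_on UNIV \<phi>" and "mono \<phi>"
  using assms convex_on_glue[of 0 "\<lambda>t. - \<phi> t" "-a"] convex_concave_on_linear_tail(2)[OF lin]
    mono_glue_linear_tail[OF _ lin] by (auto simp: Wplus_def concave_on_def)

lemma Wminus_tildeI:
  fixes f :: "real \<Rightarrow> real"
  assumes "convex_on UNIV f" "mono f" "f 0 = 0" "t \<le> 0" "f t \<noteq> 0"
  shows "Wminus_tilde f"
  unfolding Wminus_tilde_def using assms monoD[OF assms(2), of _ 0]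
  by (auto intro: convex_on_subset mono_imp_mono_on)

lemma WplusI:
  fixes f :: "real \<Rightarrow> real"
  assumes ccv: "concave_on UNIV f" and mon: "mono f" and "f 0 = 0" and neg: "\<And>t. t < 0 \<Longrightarrow> f t < 0"
    and deriv: "\<And>t D. t < 0 \<Longrightarrow> (f has_real_derivative D) (at t) \<Longrightarrow> (- t) * D \<le> M * (- f t)"
  shows "Wplus M f"
  unfolding Wplus_def
proof (intro conjI allI impI)
  fix t D :: real assume "t < 0" and D: "(f has_real_derivative D) (at t)"
  have "0 \<le> D"
    by (rule concave_on_mono_deriv_nonneg[OF ccv mon D])
  then show "\<bar>t * D\<bar> \<le> M * \<bar>f t\<bar>"
    using deriv[OF \<open>t < 0\<close> D] neg[OF \<open>t < 0\<close>] \<open>t < 0\<close> by (simp add: abs_mult)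
qed (use assms monoD[OF mon, of _ 0] in \<open>auto simp: concave_on_def intro: convex_on_subset mono_imp_mono_on\<close>)

lemma WplusI_linear_tail:
  fixes f :: "real \<Rightarrow> real"
  assumes ccv: "concave_on UNIV f" and mon: "mono f" and lin: "\<forall>t\<ge>-a. f t = c * t"
    and "0 < c" "0 < a" "1 \<le> M"
    and deriv: "\<And>t D. t \<le> -a \<Longrightarrow> (f has_real_derivative D) (at t) \<Longrightarrow> (- t) * D \<le> M * (- f t)"
  shows "Wplus M f"
proof (rule WplusI[OF ccv mon])
  show "f 0 = 0"
    using lin \<open>0 < a\<close> by simp
  show "f t < 0" if "t < 0" for t
    by (rule neg_if_mono_linear_tail[OF mon lin \<open>0 < c\<close> \<open>0 < a\<close> that])
  show "(- t) * D \<le> M * (- f t)" if "t < 0" and D: "(f has_real_derivative D) (at t)" for t D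
  proof (cases "-a < t")
    case True
    then show ?thesis
      by (rule deriv_bound_linear_tail[OF lin _ \<open>t < 0\<close> \<open>0 < c\<close> \<open>1 \<le> M\<close> D])
  next
    case False
    then show ?thesis
      by (intro deriv D) simp
  qed
qed

lemma Wplus_deriv_bound:
  assumes "Wplus M f" "t < 0" "(f has_real_derivative D) (at t)"
  shows "(- t) * D \<le> M * (- f t)"
proof -
  have "(- t) * D \<le> \<bar>t * D\<bar>" by simp
  also have "\<dots> \<le> M * \<bar>f t\<bar>" using assms by (auto simp: Wplus_def)
  also have "\<bar>f t\<bar> = - f t" using assms by (auto simp: Wplus_def)
  finally show ?thesis .
qed

lemma Wplus_chord_bound:
  fixes \<phi> :: "real \<Rightarrow> real"
  assumes ccv: "concave_on UNIV \<phi>" and mon: "mono \<phi>" and W: "Wplus M \<phi>" and "t \<le> 0" "0 < h"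
  shows "(- t) * (\<phi> t - \<phi> (t - h)) \<le> M * h * (- \<phi> (t - h))"
proof (rule ccontr)
  define F where "F w = (- t) * (\<phi> t - \<phi> w) - M * (t - w) * (- \<phi> w)" for w
  \<comment> \<open>\<open>0 < F w\<close> says that the bound fails with \<open>t - h\<close> replaced by \<open>w\<close>; the tangent at a
    point of differentiability \<open>w < t\<close> forces \<open>F w \<le> 0\<close>.\<close>
  assume "\<not> ?thesis"
  then have "0 < F (t - h)" by (simp add: F_def)
  moreover have "isCont F (t - h)"
    unfolding F_def by (intro continuous_intros concave_on_UNIV_continuous(2)[OF ccv])
  ultimately have "\<forall>\<^sub>F w in at (t - h). 0 < F w"
    by (simp add: isCont_def order_tendstoD(1))
  then obtain d where "0 < d" and pos: "\<And>w. w \<noteq> t - h \<Longrightarrow> dist w (t - h) < d \<Longrightarrow> 0 < F w"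
    unfolding eventually_at by blast
  obtain w D where w: "t - h < w" "w < min (t - h + d) t" and D: "(\<phi> has_real_derivative D) (at w)"
    using concave_on_exists_real_derivative[OF ccv, of "t - h" "min (t - h + d) t"] \<open>0 < d\<close> \<open>0 < h\<close>
    by auto
  have "0 < F w" using pos w by (simp add: dist_real_def)
  have tangent: "\<phi> t \<le> \<phi> w + D * (t - w)"
    by (rule concave_on_tangent_ge[OF ccv UNIV_I UNIV_I D])
  have "0 \<le> D"
    by (rule concave_on_mono_deriv_nonneg[OF ccv mon D])
  have "(- t) * (\<phi> t - \<phi> w) \<le> (- t) * (D * (t - w))"
    using tangent \<open>t \<le> 0\<close> by (intro mult_left_mono) simp_all
  also have "\<dots> = ((- t) * D) * (t - w)"
    by (simp add: algebra_simps)
  also have "\<dots> \<le> ((- w) * D) * (t - w)"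
    using w \<open>0 \<le> D\<close> by (intro mult_right_mono) simp_all
  also have "\<dots> \<le> (M * (- \<phi> w)) * (t - w)"
    using Wplus_deriv_bound[OF W _ D] w \<open>t \<le> 0\<close> by (intro mult_right_mono) simp_all
  finally have "F w \<le> 0" by (simp add: F_def algebra_simps)
  with \<open>0 < F w\<close> show False by simp
qed

lemma deriv_bound_if_chord_bound:
  fixes f :: "real \<Rightarrow> real"
  assumes ccv: "concave_on UNIV f" and "t < 0"
    and chord: "\<And>h. 0 < h \<Longrightarrow> (- t) * (f t - f (t - h)) \<le> M * h * (- f (t - h))"
    and D: "(f has_real_derivative D) (at t)"
  shows "(- t) * D \<le> M * (- f t)"
proof (rule tendsto_lowerbound)
  have "((\<lambda>h. t - h) \<longlongrightarrow> t) (at_right 0)"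
    by (auto intro!: tendsto_eq_intros)
  then have "((\<lambda>h. f (t - h)) \<longlongrightarrow> f t) (at_right 0)"
    by (rule isCont_tendsto_compose[OF concave_on_UNIV_continuous(2)[OF ccv]])
  then show "((\<lambda>h. M * (- f (t - h))) \<longlongrightarrow> M * (- f t)) (at_right 0)"
    by (intro tendsto_intros)
  show "\<forall>\<^sub>F h in at_right 0. (- t) * D \<le> M * (- f (t - h))"
    unfolding eventually_at_right_field
  proof (intro exI[of _ 1] conjI allI impI)
    fix h :: real assume "0 < h" "h < 1"
    have "D * h \<le> f t - f (t - h)"
      using concave_on_tangent_ge[OF ccv UNIV_I UNIV_I D, of "t - h"] by (simp add: algebra_simps)
    then have "(- t) * (D * h) \<le> (- t) * (f t - f (t - h))"
      using \<open>t < 0\<close> by (intro mult_left_mono) simp_all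
    then have "((- t) * D) * h \<le> (- t) * (f t - f (t - h))"
      by (simp only: mult.assoc)
    also have "\<dots> \<le> (M * (- f (t - h))) * h"
      using chord[OF \<open>0 < h\<close>] by (simp add: algebra_simps)
    finally show "(- t) * D \<le> M * (- f (t - h))"
      using \<open>0 < h\<close> by simp
  qed simp
qed simp

section \<open>Averages against the kernel\<close>

definition mollifier_kernel :: "(real \<Rightarrow> real) \<Rightarrow> bool" where
  "mollifier_kernel g \<longleftrightarrow> continuous_on UNIV g \<and> (\<forall>s. 0 \<le> g s) \<and> (\<forall>s. g (- s) = g s)
     \<and> (\<forall>s. 1 < \<bar>s\<bar> \<longrightarrow> g s = 0) \<and> (g has_integral 1) {-1..1}"

text \<open>The convolution \<open>f * g\<^sub>\<epsilon>\<close> at \<open>t\<close>, with the integration variable rescaled to the support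
  of \<open>g\<close> (see \<open>conv_kernel_eps_eq_kernel_average\<close>).\<close>
definition kernel_average :: "(real \<Rightarrow> real) \<Rightarrow> (real \<Rightarrow> real) \<Rightarrow> real \<Rightarrow> real \<Rightarrow> real" where
  "kernel_average g f \<epsilon> t = integral {-1..1} (\<lambda>s. f (t - \<epsilon> * s) * g s)"

lemma mollifier_kernelI:
  fixes g :: "real \<Rightarrow> real"
  assumes "smooth_real g" and supp: "\<forall>t. \<bar>t\<bar> > 1 \<longrightarrow> g t = 0" and "\<forall>t. g t = g (- t)"
    and "\<forall>t. 0 \<le> g t" and int: "(g has_integral 1) UNIV"
  shows "mollifier_kernel g"
proof -
  have "(g has_real_derivative (deriv ^^ 1) g x) (at x)" for x
    using \<open>smooth_real g\<close> unfolding smooth_real_def by (metis One_nat_def funpow_0)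
  then have "continuous_on UNIV g"
    by (intro continuous_at_imp_continuous_on ballI DERIV_isCont)
  moreover have "(\<lambda>x. if x \<in> {-1..1} then g x else 0) = g"
  proof
    fix x show "(if x \<in> {-1..1} then g x else 0) = g x"
      using supp[rule_format, of x] by (cases "x \<in> {-1..1}") (auto simp: abs_if)
  qed
  then have "(g has_integral 1) {-1..1}"
    using int has_integral_restrict_UNIV[of "{-1..1}" g 1] by simp
  ultimately show ?thesis
    using assms unfolding mollifier_kernel_def by metis
qed

lemma mollifier_kernel_continuous_on: "mollifier_kernel g \<Longrightarrow> continuous_on S g"
  unfolding mollifier_kernel_def by (blast intro: continuous_on_subset)

lemma kernel_average_integrable:
  assumes g: "mollifier_kernel g" and f: "continuous_on UNIV f"
  shows "(\<lambda>s. f (t - \<epsilon> * s) * g s) integrable_on {-1..1}"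
proof (intro integrable_continuous_interval continuous_on_mult mollifier_kernel_continuous_on[OF g])
  show "continuous_on {-1..1} (\<lambda>s. f (t - \<epsilon> * s))"
    by (rule continuous_on_compose2[OF f]) (auto intro!: continuous_intros)
qed

lemma mollifier_kernel_first_moment:
  assumes g: "mollifier_kernel g"
  shows "((\<lambda>s. s * g s) has_integral 0) {-1..1}"
proof -
  have "(\<lambda>s. s * g s) integrable_on {-1..1}"
    by (intro integrable_continuous_interval continuous_on_mult continuous_on_id
        mollifier_kernel_continuous_on[OF g])
  then obtain I where I: "((\<lambda>s. s * g s) has_integral I) {-1..1}"
    by blast
  then have "((\<lambda>s. (- s) * g (- s)) has_integral I) {-1..1}"
    using has_integral_reflect_real[of "\<lambda>s. s * g s" I 1 "-1"] by simp
  moreover have "(\<lambda>s. (- s) * g (- s)) = (\<lambda>s. - (s * g s))"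
    using g by (auto simp: mollifier_kernel_def)
  ultimately have "((\<lambda>s. - (s * g s)) has_integral I) {-1..1}"
    by simp
  then have "I = - I"
    using has_integral_neg[OF I] has_integral_unique by blast
  with I show ?thesis by simp
qed

lemma kernel_average_affine:
  assumes g: "mollifier_kernel g" and f: "\<And>s. s \<in> {-1..1} \<Longrightarrow> f (t - \<epsilon> * s) = a * (t - \<epsilon> * s) + b"
  shows "kernel_average g f \<epsilon> t = a * t + b"
proof -
  have "((\<lambda>s. (a * t + b) * g s - (a * \<epsilon>) * (s * g s)) has_integral (a * t + b) * 1 - (a * \<epsilon>) * 0) {-1..1}"
    using g mollifier_kernel_first_moment[OF g] unfolding mollifier_kernel_def
    by (intro has_integral_diff has_integral_mult_right) auto
  then have "((\<lambda>s. (a * t + b) * g s - (a * \<epsilon>) * (s * g s)) has_integral a * t + b) {-1..1}"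
    by simp
  then have "((\<lambda>s. f (t - \<epsilon> * s) * g s) has_integral a * t + b) {-1..1}"
  proof (rule has_integral_eq[rotated])
    fix s :: real assume "s \<in> {-1..1}"
    then show "(a * t + b) * g s - (a * \<epsilon>) * (s * g s) = f (t - \<epsilon> * s) * g s"
      unfolding f[OF \<open>s \<in> {-1..1}\<close>] by (simp add: algebra_simps)
  qed
  then show ?thesis
    unfolding kernel_average_def by blast
qed

lemma kernel_average_linear_tail:
  assumes g: "mollifier_kernel g" and lin: "\<forall>t\<ge>a. f t = c * t" and "0 \<le> \<epsilon>" "a + \<epsilon> \<le> t"
  shows "kernel_average g f \<epsilon> t = c * t"
proof -
  have "a \<le> t - \<epsilon> * s" if "s \<in> {-1..1}" for s
    using mult_left_mono[of s 1 \<epsilon>] that assms(3,4) by simp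
  then show ?thesis
    using kernel_average_affine[OF g, of f t \<epsilon> c 0] lin by simp
qed

lemma kernel_average_const: "mollifier_kernel g \<Longrightarrow> kernel_average g (\<lambda>_. L) \<epsilon> t = L"
  using kernel_average_affine[of g "\<lambda>_. L" t \<epsilon> 0 L] by simp

lemma kernel_average_le:
  assumes g: "mollifier_kernel g" and "continuous_on UNIV f\<^sub>1" "continuous_on UNIV f\<^sub>2"
    and le: "\<And>s. s \<in> {-1..1} \<Longrightarrow> f\<^sub>1 (t - \<epsilon> * s) \<le> f\<^sub>2 (t' - \<epsilon>' * s)"
  shows "kernel_average g f\<^sub>1 \<epsilon> t \<le> kernel_average g f\<^sub>2 \<epsilon>' t'"
  unfolding kernel_average_def
  using g le by (intro integral_le kernel_average_integrable assms mult_right_mono)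
    (auto simp: mollifier_kernel_def)

lemma kernel_average_dist_le:
  assumes g: "mollifier_kernel g" and f: "continuous_on UNIV f"
    and near: "\<And>s. s \<in> {-1..1} \<Longrightarrow> \<bar>f (t - \<epsilon> * s) - L\<bar> \<le> \<eta>"
  shows "\<bar>kernel_average g f \<epsilon> t - L\<bar> \<le> \<eta>"
proof -
  have "kernel_average g f \<epsilon> t \<le> kernel_average g (\<lambda>_. L + \<eta>) \<epsilon> t"
    and "kernel_average g (\<lambda>_. L - \<eta>) \<epsilon> t \<le> kernel_average g f \<epsilon> t"
    using near by (intro kernel_average_le[OF g] f continuous_on_const; force simp: abs_le_iff)+
  then show ?thesis
    by (simp add: kernel_average_const[OF g] abs_le_iff)
qed

lemma kernel_average_cmult: "kernel_average g (\<lambda>x. a * f x) \<epsilon> t = a * kernel_average g f \<epsilon> t"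
  unfolding kernel_average_def by (simp add: mult.assoc)

lemma kernel_average_shift: "kernel_average g (\<lambda>x. f (x + a)) \<epsilon> t = kernel_average g f \<epsilon> (t + a)"
  unfolding kernel_average_def by (simp add: algebra_simps)

lemma kernel_average_uminus_radius:
  assumes "mollifier_kernel g"
  shows "kernel_average g f (- \<epsilon>) t = kernel_average g f \<epsilon> t"
  using Henstock_Kurzweil_Integration.integral_reflect_real[of 1 "-1" "\<lambda>s. f (t - \<epsilon> * s) * g s"] assms
  by (simp add: kernel_average_def mollifier_kernel_def)

lemma mono_kernel_average:
  assumes g: "mollifier_kernel g" and "continuous_on UNIV f" "mono f"
  shows "mono (kernel_average g f \<epsilon>)"
  using assms by (intro monoI kernel_average_le[OF g]) (auto intro: monoD)

lemma convex_on_kernel_average: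
  assumes g: "mollifier_kernel g" and f: "continuous_on UNIV f" "convex_on UNIV f"
  shows "convex_on UNIV (kernel_average g f \<epsilon>)"
proof (rule convex_onI)
  fix u x y :: real assume u: "0 < u" "u < 1"
  let ?F = "\<lambda>z s. f (z - \<epsilon> * s) * g s"
  have "kernel_average g f \<epsilon> ((1 - u) *\<^sub>R x + u *\<^sub>R y)
      \<le> integral {-1..1} (\<lambda>s. (1 - u) * ?F x s + u * ?F y s)"
    unfolding kernel_average_def
  proof (intro integral_le kernel_average_integrable[OF g f(1)] integrable_add integrable_on_mult_right)
    fix s :: real
    have arg: "(1 - u) *\<^sub>R x + u *\<^sub>R y - \<epsilon> * s = (1 - u) *\<^sub>R (x - \<epsilon> * s) + u *\<^sub>R (y - \<epsilon> * s)"
      by (simp add: algebra_simps)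
    have "f ((1 - u) *\<^sub>R x + u *\<^sub>R y - \<epsilon> * s) \<le> (1 - u) * f (x - \<epsilon> * s) + u * f (y - \<epsilon> * s)"
      unfolding arg using convex_onD[OF f(2), of u] u by simp
    from mult_right_mono[OF this, of "g s"]
    show "?F ((1 - u) *\<^sub>R x + u *\<^sub>R y) s \<le> (1 - u) * ?F x s + u * ?F y s"
      using g by (simp add: mollifier_kernel_def algebra_simps)
  qed
  also have "\<dots> = (1 - u) * kernel_average g f \<epsilon> x + u * kernel_average g f \<epsilon> y"
    unfolding kernel_average_def
    by (simp add: integral_add integrable_on_mult_right kernel_average_integrable[OF g f(1)])
  finally show "kernel_average g f \<epsilon> ((1 - u) *\<^sub>R x + u *\<^sub>R y)
      \<le> (1 - u) * kernel_average g f \<epsilon> x + u * kernel_average g f \<epsilon> y" .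
qed simp

lemma concave_on_kernel_average:
  assumes g: "mollifier_kernel g" and "continuous_on UNIV f" "concave_on UNIV f"
  shows "concave_on UNIV (kernel_average g f \<epsilon>)"
proof -
  have "kernel_average g (\<lambda>x. - f x) \<epsilon> = (\<lambda>t. - kernel_average g f \<epsilon> t)"
    using kernel_average_cmult[of g "-1" f \<epsilon>] by auto
  then show ?thesis
    using convex_on_kernel_average[OF g, of "\<lambda>x. - f x" \<epsilon>] assms
    by (simp add: concave_on_def continuous_on_minus)
qed

lemma kernel_average_mono_radius:
  assumes g: "mollifier_kernel g" and f: "continuous_on UNIV f" "convex_on UNIV f"
    and "0 \<le> \<epsilon>\<^sub>1" "\<epsilon>\<^sub>1 \<le> \<epsilon>\<^sub>2"
  shows "kernel_average g f \<epsilon>\<^sub>1 t \<le> kernel_average g f \<epsilon>\<^sub>2 t"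
proof -
  let ?S = "\<lambda>\<epsilon> s. (f (t - \<epsilon> * s) + f (t + \<epsilon> * s)) * g s"
  have sym: "2 * kernel_average g f \<epsilon> t = integral {-1..1} (?S \<epsilon>)" for \<epsilon>
  proof -
    have "2 * kernel_average g f \<epsilon> t = kernel_average g f \<epsilon> t + kernel_average g f (- \<epsilon>) t"
      by (simp add: kernel_average_uminus_radius[OF g])
    also have "\<dots> = integral {-1..1} (?S \<epsilon>)"
      unfolding kernel_average_def distrib_right
      using integral_add[OF kernel_average_integrable[OF g f(1), of t \<epsilon>]
          kernel_average_integrable[OF g f(1), of t "- \<epsilon>"]] by simp
    finally show ?thesis .
  qed
  have int: "?S \<epsilon> integrable_on {-1..1}" for \<epsilon>
    unfolding distrib_right
    using integrable_add[OF kernel_average_integrable[OF g f(1), of t \<epsilon>]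
        kernel_average_integrable[OF g f(1), of t "- \<epsilon>"]] by simp
  have "integral {-1..1} (?S \<epsilon>\<^sub>1) \<le> integral {-1..1} (?S \<epsilon>\<^sub>2)"
  proof (rule integral_le[OF int int])
    fix s :: real
    have "f (t - \<epsilon> * s) + f (t + \<epsilon> * s) = f (t - \<epsilon> * \<bar>s\<bar>) + f (t + \<epsilon> * \<bar>s\<bar>)" for \<epsilon>
      by (cases "0 \<le> s") simp_all
    moreover have "f (t - \<epsilon>\<^sub>1 * \<bar>s\<bar>) + f (t + \<epsilon>\<^sub>1 * \<bar>s\<bar>) \<le> f (t - \<epsilon>\<^sub>2 * \<bar>s\<bar>) + f (t + \<epsilon>\<^sub>2 * \<bar>s\<bar>)"
      using assms(4,5) by (intro convex_on_symmetric_sum_mono[OF f(2)] mult_right_mono) simp_all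
    ultimately show "?S \<epsilon>\<^sub>1 s \<le> ?S \<epsilon>\<^sub>2 s"
      using g by (auto simp: mollifier_kernel_def intro: mult_right_mono)
  qed
  then show ?thesis
    unfolding sym[symmetric] by simp
qed

lemma kernel_average_le_linear_tail:
  fixes f :: "real \<Rightarrow> real"
  assumes g: "mollifier_kernel g" and f: "convex_on UNIV f" "mono f" and lin: "\<forall>t\<ge>a. f t = c * t"
    and "0 < \<epsilon>"
  shows "kernel_average g f \<epsilon> t \<le> f t + c * \<epsilon>"
proof -
  have "f (t - \<epsilon> * s) \<le> f t + c * \<epsilon>" if "s \<in> {-1..1}" for s
  proof -
    have "f (t - \<epsilon> * s) \<le> f (t + \<epsilon>)"
      using mult_left_mono[of "-1" s \<epsilon>] that \<open>0 < \<epsilon>\<close> by (intro monoD[OF f(2)]) simp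
    also have "\<dots> \<le> f t + c * \<epsilon>"
      using convex_on_increment_le_linear_tail[OF f(1) lin, of t "t + \<epsilon>"] \<open>0 < \<epsilon>\<close> by simp
    finally show ?thesis .
  qed
  then have "kernel_average g f \<epsilon> t \<le> kernel_average g (\<lambda>_. f t + c * \<epsilon>) \<epsilon> t"
    by (intro kernel_average_le[OF g convex_on_continuous[OF open_UNIV f(1)] continuous_on_const])
  then show ?thesis
    by (simp add: kernel_average_const[OF g])
qed

lemma kernel_average_shift_ge:
  assumes g: "mollifier_kernel g" and "continuous_on UNIV f" "mono f" "0 \<le> \<epsilon>"
  shows "f t \<le> kernel_average g f \<epsilon> (t + \<epsilon>)"
proof -
  have "f t \<le> f (t + \<epsilon> - \<epsilon> * s)" if "s \<in> {-1..1}" for s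
    using mult_left_mono[of s 1 \<epsilon>] that \<open>0 \<le> \<epsilon>\<close> by (intro monoD[OF \<open>mono f\<close>]) simp
  then have "kernel_average g (\<lambda>_. f t) \<epsilon> (t + \<epsilon>) \<le> kernel_average g f \<epsilon> (t + \<epsilon>)"
    by (intro kernel_average_le[OF g continuous_on_const \<open>continuous_on UNIV f\<close>])
  then show ?thesis
    by (simp add: kernel_average_const[OF g])
qed

lemma kernel_average_uniform_limit:
  assumes g: "mollifier_kernel g" and f: "continuous_on UNIV f" and K: "compact K"
  shows "uniform_limit K (\<lambda>\<epsilon> t. kernel_average g f \<epsilon> (t + a * \<epsilon>)) f (at_right 0)"
  unfolding uniform_limit_iff
proof (intro allI impI)
  fix \<eta> :: real assume "0 < \<eta>"
  obtain R where R: "\<And>t. t \<in> K \<Longrightarrow> \<bar>t\<bar> \<le> R"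
    using compact_imp_bounded[OF K] bounded_real by auto
  define B where "B = \<bar>a\<bar> + 1"
  have "0 < B" by (simp add: B_def add_nonneg_pos)
  have "uniformly_continuous_on {-R-B..R+B} f"
    by (rule compact_uniformly_continuous) (auto intro: continuous_on_subset[OF f])
  then obtain d where "0 < d"
    and d: "\<And>x y. x \<in> {-R-B..R+B} \<Longrightarrow> y \<in> {-R-B..R+B} \<Longrightarrow> dist y x < d \<Longrightarrow> dist (f y) (f x) < \<eta> / 2"
    unfolding uniformly_continuous_on_def using \<open>0 < \<eta>\<close> by (meson half_gt_zero)
  show "\<forall>\<^sub>F \<epsilon> in at_right 0. \<forall>t\<in>K. dist (kernel_average g f \<epsilon> (t + a * \<epsilon>)) (f t) < \<eta>"
    unfolding eventually_at_right_field
  proof (intro exI[of _ "min 1 (d / B)"] conjI allI impI ballI)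
    fix \<epsilon> t assume \<epsilon>: "0 < \<epsilon>" "\<epsilon> < min 1 (d / B)" and "t \<in> K"
    have "\<epsilon> * B < d" "\<epsilon> * B < B"
      using \<epsilon> \<open>0 < B\<close> by (simp_all add: less_divide_eq)
    have "\<bar>f (t + a * \<epsilon> - \<epsilon> * s) - f t\<bar> \<le> \<eta> / 2" if "s \<in> {-1..1}" for s
    proof -
      let ?y = "t + a * \<epsilon> - \<epsilon> * s"
      have "\<bar>a - s\<bar> \<le> B"
        using abs_triangle_ineq4[of a s] that by (auto simp: B_def)
      moreover have "?y - t = \<epsilon> * (a - s)"
        by (simp add: algebra_simps)
      ultimately have "\<bar>?y - t\<bar> \<le> \<epsilon> * B"
        using \<epsilon> by (simp add: abs_mult mult_left_mono)
      then have "dist ?y t < d" "?y \<in> {-R-B..R+B}" "t \<in> {-R-B..R+B}"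
        using R[OF \<open>t \<in> K\<close>] \<open>\<epsilon> * B < d\<close> \<open>\<epsilon> * B < B\<close> \<open>0 < B\<close>
        unfolding dist_real_def atLeastAtMost_iff abs_le_iff by linarith+
      then have "dist (f ?y) (f t) < \<eta> / 2"
        by (intro d)
      then show ?thesis
        by (simp add: dist_real_def)
    qed
    then have "\<bar>kernel_average g f \<epsilon> (t + a * \<epsilon>) - f t\<bar> \<le> \<eta> / 2"
      by (rule kernel_average_dist_le[OF g f])
    then show "dist (kernel_average g f \<epsilon> (t + a * \<epsilon>)) (f t) < \<eta>"
      using \<open>0 < \<eta>\<close> by (simp add: dist_real_def)
  qed (use \<open>0 < d\<close> \<open>0 < B\<close> in simp)
qed

lemma conv_kernel_eps_eq_kernel_average:
  assumes g: "mollifier_kernel g" and f: "continuous_on UNIV f" and "0 < \<epsilon>"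
  shows "conv f (kernel_eps g \<epsilon>) = kernel_average g f \<epsilon>"
proof
  fix t
  define h where "h s = f (t - \<epsilon> * s) * g s" for s
  have "(h has_integral kernel_average g f \<epsilon> t) {-1..1}"
    unfolding h_def kernel_average_def using kernel_average_integrable[OF g f] by blast
  then have "((\<lambda>x. h ((1 / \<epsilon>) * x)) has_integral \<epsilon> * kernel_average g f \<epsilon> t)
      ((\<lambda>x. x / (1 / \<epsilon>)) ` {-1..1})"
    using has_integral_stretch_real[of h _ "-1" 1 "1 / \<epsilon>"] \<open>0 < \<epsilon>\<close> by simp
  moreover have "h ((1 / \<epsilon>) * x) = 0" if "x \<notin> (\<lambda>x. x / (1 / \<epsilon>)) ` {-1..1}" for x
  proof -
    have "x = (x / \<epsilon>) / (1 / \<epsilon>)" using \<open>0 < \<epsilon>\<close> by simp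
    then have "x / \<epsilon> \<notin> {-1..1}" using that by blast
    then show ?thesis
      using g by (auto simp: h_def mollifier_kernel_def abs_if)
  qed
  ultimately have "((\<lambda>x. h ((1 / \<epsilon>) * x)) has_integral \<epsilon> * kernel_average g f \<epsilon> t) UNIV"
    by (rule has_integral_on_superset[OF _ _ subset_UNIV])
  from has_integral_mult_right[OF this, of "1 / \<epsilon>"]
  have "((\<lambda>s. f (t - s) * kernel_eps g \<epsilon> s) has_integral kernel_average g f \<epsilon> t) UNIV"
    using \<open>0 < \<epsilon>\<close> by (simp add: h_def kernel_eps_def)
  then show "conv f (kernel_eps g \<epsilon>) t = kernel_average g f \<epsilon> t"
    unfolding conv_def by (rule integral_unique)
qed

lemma conv_kernel_eps_tendsto:
  assumes g: "mollifier_kernel g" and f: "continuous_on UNIV f"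
  shows "((\<lambda>\<epsilon>. conv f (kernel_eps g \<epsilon>) t) \<longlongrightarrow> f t) (at_right 0)"
proof (rule Lim_transform_eventually)
  show "((\<lambda>\<epsilon>. kernel_average g f \<epsilon> t) \<longlongrightarrow> f t) (at_right 0)"
    using kernel_average_uniform_limit[OF g f, of "{t}" 0] by simp
  show "\<forall>\<^sub>F \<epsilon> in at_right 0. kernel_average g f \<epsilon> t = conv f (kernel_eps g \<epsilon>) t"
    using eventually_at_right_less[of 0]
    by eventually_elim (simp add: conv_kernel_eps_eq_kernel_average[OF g f])
qed

lemma conv_kernel_eps_shift_uniform_limit:
  assumes g: "mollifier_kernel g" and f: "continuous_on UNIV f" and K: "compact K"
  shows "uniform_limit K (\<lambda>\<epsilon> t. conv f (kernel_eps g \<epsilon>) (t + \<epsilon>) - c * \<epsilon>) f (at_right 0)"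
proof -
  have "((\<lambda>\<epsilon>. c * \<epsilon>) \<longlongrightarrow> 0) (at_right 0)"
    by (auto intro!: tendsto_eq_intros)
  then have "uniform_limit K (\<lambda>\<epsilon> t. c * \<epsilon>) (\<lambda>t. 0) (at_right 0)"
    by (auto intro!: uniform_limitI dest: tendstoD)
  with kernel_average_uniform_limit[OF g f K, of 1]
  have "uniform_limit K (\<lambda>\<epsilon> t. kernel_average g f \<epsilon> (t + \<epsilon>) - c * \<epsilon>) (\<lambda>t. f t - 0) (at_right 0)"
    by (intro uniform_limit_intros) simp_all
  then have lim: "uniform_limit K (\<lambda>\<epsilon> t. kernel_average g f \<epsilon> (t + \<epsilon>) - c * \<epsilon>) f (at_right 0)"
    by simp
  have "\<forall>\<^sub>F \<epsilon> in at_right 0. \<forall>t\<in>K.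
      kernel_average g f \<epsilon> (t + \<epsilon>) - c * \<epsilon> = conv f (kernel_eps g \<epsilon>) (t + \<epsilon>) - c * \<epsilon>"
    using eventually_at_right_less[of 0]
    by eventually_elim (simp add: conv_kernel_eps_eq_kernel_average[OF g f])
  from uniform_limit_cong[OF this, of f f] lim show ?thesis
    by simp
qed

section \<open>Mollification of the two classes\<close>

lemma kernel_average_chord_bound:
  fixes \<phi> :: "real \<Rightarrow> real"
  assumes g: "mollifier_kernel g" and cont: "continuous_on UNIV \<phi>" and mon: "mono \<phi>"
    and chord: "\<And>u h. u < 0 \<Longrightarrow> 0 < h \<Longrightarrow> (- u) * (\<phi> u - \<phi> (u - h)) \<le> M * h * (- \<phi> (u - h))"
    and "0 < \<epsilon>" "\<epsilon> \<le> \<delta> * (- t)" "\<delta> < 1" "t < 0" "0 < h"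
  shows "(- t) * (kernel_average g \<phi> \<epsilon> t - kernel_average g \<phi> \<epsilon> (t - h))
           \<le> M / (1 - \<delta>) * h * (- kernel_average g \<phi> \<epsilon> (t - h))"
proof -
  define M' where "M' = M / (1 - \<delta>)"
  have pointwise: "(- t) * \<phi> (t - \<epsilon> * s) \<le> ((- t) - M' * h) * \<phi> (t - \<epsilon> * s - h)"
    if "s \<in> {-1..1}" for s
  proof -
    define u where "u = t - \<epsilon> * s"
    have "- \<epsilon> \<le> \<epsilon> * s"
      using mult_left_mono[of "-1" s \<epsilon>] that \<open>0 < \<epsilon>\<close> by simp
    then have "(1 - \<delta>) * (- t) \<le> - u"
      using \<open>\<epsilon> \<le> \<delta> * (- t)\<close> by (simp add: u_def algebra_simps)
    moreover have "0 < (1 - \<delta>) * (- t)"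
      using \<open>\<delta> < 1\<close> \<open>t < 0\<close> by (intro mult_pos_pos) simp_all
    ultimately have "u < 0" by linarith
    have "0 \<le> \<phi> u - \<phi> (u - h)"
      using monoD[OF mon, of "u - h" u] \<open>0 < h\<close> by simp
    then have "((1 - \<delta>) * (- t)) * (\<phi> u - \<phi> (u - h)) \<le> (- u) * (\<phi> u - \<phi> (u - h))"
      using \<open>(1 - \<delta>) * (- t) \<le> - u\<close> by (rule mult_right_mono[rotated])
    also have "\<dots> \<le> M * h * (- \<phi> (u - h))"
      using chord[OF \<open>u < 0\<close> \<open>0 < h\<close>] .
    also have "\<dots> = (1 - \<delta>) * (M' * h * (- \<phi> (u - h)))"
      using \<open>\<delta> < 1\<close> by (simp add: M'_def)
    finally have "(- t) * (\<phi> u - \<phi> (u - h)) \<le> M' * h * (- \<phi> (u - h))"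
      using \<open>\<delta> < 1\<close> by (simp add: mult.assoc)
    then show ?thesis
      by (simp add: u_def algebra_simps)
  qed
  have "continuous_on UNIV (\<lambda>x. \<phi> (x - h))"
    by (rule continuous_on_compose2[OF cont]) (auto intro!: continuous_intros)
  then have "kernel_average g (\<lambda>x. (- t) * \<phi> x) \<epsilon> t
      \<le> kernel_average g (\<lambda>x. ((- t) - M' * h) * \<phi> (x + - h)) \<epsilon> t"
    using pointwise by (intro kernel_average_le[OF g] continuous_on_mult_left cont) simp_all
  then have "(- t) * kernel_average g \<phi> \<epsilon> t \<le> ((- t) - M' * h) * kernel_average g \<phi> \<epsilon> (t - h)"
    by (simp only: kernel_average_cmult kernel_average_shift[of g \<phi> "- h"]) simp
  then show ?thesis
    by (simp add: M'_def algebra_simps)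
qed

lemma Wminus_tilde_kernel_average:
  fixes \<phi> g :: "real \<Rightarrow> real"
  assumes g: "mollifier_kernel g" and cvx: "convex_on UNIV \<phi>" and mon: "mono \<phi>"
    and lin: "\<forall>t\<ge>-\<delta>. \<phi> t = c * t" and "0 < c" "0 < \<epsilon>" "\<epsilon> < \<delta>"
  shows "Wminus_tilde (kernel_average g \<phi> \<epsilon>)"
proof (rule Wminus_tildeI)
  have cont: "continuous_on UNIV \<phi>"
    using convex_on_continuous[OF open_UNIV cvx] .
  show "convex_on UNIV (kernel_average g \<phi> \<epsilon>)" "mono (kernel_average g \<phi> \<epsilon>)"
    by (rule convex_on_kernel_average[OF g cont cvx], rule mono_kernel_average[OF g cont mon])
  show "kernel_average g \<phi> \<epsilon> 0 = 0" "kernel_average g \<phi> \<epsilon> (\<epsilon> - \<delta>) \<noteq> 0"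
    using kernel_average_linear_tail[OF g lin, of \<epsilon>] assms by simp_all
qed (use assms in simp)

lemma Wplus_kernel_average:
  fixes \<phi> g :: "real \<Rightarrow> real"
  assumes g: "mollifier_kernel g" and W: "Wplus M \<phi>" and ccv: "concave_on UNIV \<phi>" and mon: "mono \<phi>"
    and lin: "\<forall>t\<ge>-\<delta>. \<phi> t = c * t" and "0 < c" "0 < \<delta>" "\<delta> < 1" "1 \<le> M" "0 < \<epsilon>" "\<epsilon> < \<delta>\<^sup>2 / 2"
  shows "Wplus (M / (1 - \<delta>)) (kernel_average g \<phi> \<epsilon>)"
proof -
  have cont: "continuous_on UNIV \<phi>"
    by (rule concave_on_UNIV_continuous(1)[OF ccv])
  have ccv_av: "concave_on UNIV (kernel_average g \<phi> \<epsilon>)"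
    by (rule concave_on_kernel_average[OF g cont ccv])
  have "\<delta>\<^sup>2 < \<delta>"
    using \<open>0 < \<delta>\<close> \<open>\<delta> < 1\<close> by (simp add: power2_eq_square)
  then have "\<epsilon> < \<delta>"
    using \<open>\<epsilon> < \<delta>\<^sup>2 / 2\<close> \<open>0 < \<epsilon>\<close> by simp
  have chord: "(- u) * (\<phi> u - \<phi> (u - h)) \<le> M * h * (- \<phi> (u - h))" if "u < 0" "0 < h" for u h
    using Wplus_chord_bound[OF ccv mon W, of u h] that by simp
  show ?thesis
  proof (rule WplusI_linear_tail[where a = "\<delta> - \<epsilon>", OF ccv_av mono_kernel_average[OF g cont mon]])
    show "\<forall>t\<ge>- (\<delta> - \<epsilon>). kernel_average g \<phi> \<epsilon> t = c * t"
      using kernel_average_linear_tail[OF g lin] \<open>0 < \<epsilon>\<close> by simp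
    show "1 \<le> M / (1 - \<delta>)"
      using \<open>1 \<le> M\<close> \<open>\<delta> < 1\<close> \<open>0 < \<delta>\<close> by (simp add: le_divide_eq)
    fix t D assume t: "t \<le> - (\<delta> - \<epsilon>)" and D: "(kernel_average g \<phi> \<epsilon> has_real_derivative D) (at t)"
    have "\<epsilon> * \<delta> < \<epsilon>"
      using mult_strict_left_mono[of \<delta> 1 \<epsilon>] \<open>\<delta> < 1\<close> \<open>0 < \<epsilon>\<close> by simp
    then have "\<epsilon> * (1 + \<delta>) < \<delta>\<^sup>2"
      using \<open>\<epsilon> < \<delta>\<^sup>2 / 2\<close> by (simp add: distrib_left)
    then have "\<epsilon> \<le> \<delta> * (\<delta> - \<epsilon>)"
      by (simp add: power2_eq_square algebra_simps)
    also have "\<dots> \<le> \<delta> * (- t)"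
      using t \<open>0 < \<delta>\<close> by (intro mult_left_mono) simp_all
    finally have "\<epsilon> \<le> \<delta> * (- t)" .
    have "t < 0"
      using t \<open>\<epsilon> < \<delta>\<close> by simp
    show "(- t) * D \<le> M / (1 - \<delta>) * (- kernel_average g \<phi> \<epsilon> t)"
      by (rule deriv_bound_if_chord_bound[OF ccv_av \<open>t < 0\<close> _ D],
          rule kernel_average_chord_bound[OF g cont mon chord \<open>0 < \<epsilon>\<close> \<open>\<epsilon> \<le> \<delta> * (- t)\<close> \<open>\<delta> < 1\<close> \<open>t < 0\<close>])
  qed (use \<open>0 < c\<close> \<open>\<epsilon> < \<delta>\<close> in simp_all)
qed

lemma Wplus_shift:
  fixes \<psi> :: "real \<Rightarrow> real"
  assumes ccv: "concave_on UNIV \<psi>" and mon: "mono \<psi>" and W: "Wplus M \<psi>"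
    and lin: "\<forall>t\<ge>- (\<delta> - \<epsilon>). \<psi> t = c * t"
    and "0 < c" "0 < \<delta>" "\<delta> < 1" "1 \<le> M" "0 < \<epsilon>" "\<epsilon> \<le> \<delta>\<^sup>2"
  shows "Wplus (M / (1 - \<delta>)) (\<lambda>t. \<psi> (t + \<epsilon>) - c * \<epsilon>)"
proof -
  define \<theta> where "\<theta> t = \<psi> (t + \<epsilon>) - c * \<epsilon>" for t
  have ccv\<theta>: "concave_on UNIV \<theta>"
    unfolding \<theta>_def using concave_on_UNIV_translate[OF ccv, of \<epsilon> "- (c * \<epsilon>)"] by simp
  have mon\<theta>: "mono \<theta>"
    by (rule monoI) (simp add: \<theta>_def monoD[OF mon])
  have "\<delta>\<^sup>2 < \<delta>"
    using \<open>0 < \<delta>\<close> \<open>\<delta> < 1\<close> by (simp add: power2_eq_square)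
  show ?thesis
    unfolding \<theta>_def[symmetric]
  proof (rule WplusI_linear_tail[where a = \<delta>, OF ccv\<theta> mon\<theta>])
    show "\<forall>t\<ge>- \<delta>. \<theta> t = c * t"
      using lin by (simp add: \<theta>_def distrib_left)
    show "1 \<le> M / (1 - \<delta>)"
      using \<open>1 \<le> M\<close> \<open>\<delta> < 1\<close> \<open>0 < \<delta>\<close> by (simp add: le_divide_eq)
    fix t D assume t: "t \<le> - \<delta>" and D: "(\<theta> has_real_derivative D) (at t)"
    have "((\<lambda>x. \<theta> x + c * \<epsilon>) has_real_derivative D) (at t)"
      using D by (auto intro!: derivative_eq_intros)
    then have D': "(\<psi> has_real_derivative D) (at (t + \<epsilon>))"
      by (simp add: \<theta>_def DERIV_shift)
    have "t + \<epsilon> < 0"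
      using \<open>\<epsilon> \<le> \<delta>\<^sup>2\<close> \<open>\<delta>\<^sup>2 < \<delta>\<close> t by simp
    have "\<epsilon> \<le> \<delta> * (- t)"
      using \<open>\<epsilon> \<le> \<delta>\<^sup>2\<close> mult_left_mono[of \<delta> "- t" \<delta>] t \<open>0 < \<delta>\<close> by (simp add: power2_eq_square)
    then have "(1 - \<delta>) * (- t) \<le> - (t + \<epsilon>)"
      by (simp add: algebra_simps)
    then have "((1 - \<delta>) * (- t)) * D \<le> (- (t + \<epsilon>)) * D"
      by (rule mult_right_mono) (rule concave_on_mono_deriv_nonneg[OF ccv\<theta> mon\<theta> D])
    then have "(1 - \<delta>) * ((- t) * D) \<le> (- (t + \<epsilon>)) * D"
      by (simp only: mult.assoc)
    also have "\<dots> \<le> M * (- \<psi> (t + \<epsilon>))"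
      by (rule Wplus_deriv_bound[OF W \<open>t + \<epsilon> < 0\<close> D'])
    also have "\<dots> \<le> M * (- \<theta> t)"
      using \<open>0 < c\<close> \<open>0 < \<epsilon>\<close> \<open>1 \<le> M\<close> by (intro mult_left_mono) (simp_all add: \<theta>_def)
    also have "\<dots> = (1 - \<delta>) * (M / (1 - \<delta>) * (- \<theta> t))"
      using \<open>\<delta> < 1\<close> by simp
    finally show "(- t) * D \<le> M / (1 - \<delta>) * (- \<theta> t)"
      by (rule mult_left_le_imp_le) (use \<open>\<delta> < 1\<close> in simp)
  qed (use \<open>0 < c\<close> \<open>0 < \<delta>\<close> in simp_all)
qed

lemma mollify_Wminus_tilde:
  fixes \<phi> g :: "real \<Rightarrow> real"
  assumes g: "mollifier_kernel g" and W: "Wminus_tilde \<phi>" and lin: "\<forall>t\<ge>-\<delta>. \<phi> t = c * t"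
    and "0 < c" "0 < \<delta>"
  shows "(\<forall>\<epsilon>. 0 < \<epsilon> \<and> \<epsilon> < \<delta> \<longrightarrow> Wminus_tilde (conv \<phi> (kernel_eps g \<epsilon>)))
      \<and> (\<forall>t. (\<forall>\<epsilon>1 \<epsilon>2. 0 < \<epsilon>1 \<and> \<epsilon>1 \<le> \<epsilon>2 \<longrightarrow>
                 conv \<phi> (kernel_eps g \<epsilon>1) t \<le> conv \<phi> (kernel_eps g \<epsilon>2) t)
             \<and> ((\<lambda>\<epsilon>. conv \<phi> (kernel_eps g \<epsilon>) t) \<longlongrightarrow> \<phi> t) (at_right 0))
      \<and> (\<forall>\<epsilon>>0. \<forall>t. conv \<phi> (kernel_eps g \<epsilon>) t - \<phi> t \<le> c * \<epsilon>)"
proof -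
  have cvx: "convex_on UNIV \<phi>" and mon: "mono \<phi>"
    using convex_on_mono_if_Wminus_tilde[OF W lin \<open>0 < c\<close> \<open>0 < \<delta>\<close>] by auto
  have cont: "continuous_on UNIV \<phi>"
    using convex_on_continuous[OF open_UNIV cvx] .
  note conv = conv_kernel_eps_eq_kernel_average[OF g cont]
  have "Wminus_tilde (conv \<phi> (kernel_eps g \<epsilon>))" if "0 < \<epsilon>" "\<epsilon> < \<delta>" for \<epsilon>
    using Wminus_tilde_kernel_average[OF g cvx mon lin \<open>0 < c\<close> that] by (simp add: conv[OF that(1)])
  moreover have "conv \<phi> (kernel_eps g \<epsilon>\<^sub>1) t \<le> conv \<phi> (kernel_eps g \<epsilon>\<^sub>2) t"
    if "0 < \<epsilon>\<^sub>1" "\<epsilon>\<^sub>1 \<le> \<epsilon>\<^sub>2" for \<epsilon>\<^sub>1 \<epsilon>\<^sub>2 t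
    using that kernel_average_mono_radius[OF g cont cvx, of \<epsilon>\<^sub>1 \<epsilon>\<^sub>2 t] by (simp add: conv)
  moreover have "conv \<phi> (kernel_eps g \<epsilon>) t - \<phi> t \<le> c * \<epsilon>" if "0 < \<epsilon>" for \<epsilon> t
    using kernel_average_le_linear_tail[OF g cvx mon lin that, of t] by (simp add: conv[OF that])
  ultimately show ?thesis
    using conv_kernel_eps_tendsto[OF g cont] by blast
qed

lemma mollify_Wplus:
  fixes \<phi> g :: "real \<Rightarrow> real"
  assumes g: "mollifier_kernel g" and W: "Wplus M \<phi>" and lin: "\<forall>t\<ge>-\<delta>. \<phi> t = c * t"
    and "0 < c" "0 < \<delta>" "\<delta> < 1" "1 \<le> M"
  shows "(\<forall>\<epsilon>. 0 < \<epsilon> \<and> \<epsilon> < \<delta>\<^sup>2 / 2 \<longrightarrow>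
               Wplus (M / (1 - \<delta>)) (conv \<phi> (kernel_eps g \<epsilon>)))
      \<and> (\<forall>\<epsilon>. 0 < \<epsilon> \<and> \<epsilon> < \<delta>\<^sup>2 / 8 \<longrightarrow>
               Wplus (M / (1 - \<delta>)\<^sup>2) (\<lambda>t. conv \<phi> (kernel_eps g \<epsilon>) (t + \<epsilon>) - c * \<epsilon>)
             \<and> (\<forall>t. conv \<phi> (kernel_eps g \<epsilon>) (t + \<epsilon>) - c * \<epsilon> \<ge> \<phi> t - c * \<epsilon>))
      \<and> (\<forall>K. compact K \<longrightarrow>
             uniform_limit K (\<lambda>\<epsilon> t. conv \<phi> (kernel_eps g \<epsilon>) (t + \<epsilon>) - c * \<epsilon>) \<phi> (at_right 0))"
proof -
  have ccv: "concave_on UNIV \<phi>" and mon: "mono \<phi>"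
    using concave_on_mono_if_Wplus[OF W lin \<open>0 < c\<close> \<open>0 < \<delta>\<close>] by auto
  have cont: "continuous_on UNIV \<phi>"
    by (rule concave_on_UNIV_continuous(1)[OF ccv])
  note conv = conv_kernel_eps_eq_kernel_average[OF g cont]
  note W_av = Wplus_kernel_average[OF g W ccv mon lin \<open>0 < c\<close> \<open>0 < \<delta>\<close> \<open>\<delta> < 1\<close> \<open>1 \<le> M\<close>]
  have "Wplus (M / (1 - \<delta>)) (conv \<phi> (kernel_eps g \<epsilon>))" if "0 < \<epsilon>" "\<epsilon> < \<delta>\<^sup>2 / 2" for \<epsilon>
    using W_av[OF that] by (simp add: conv[OF that(1)])
  moreover have "Wplus (M / (1 - \<delta>)\<^sup>2) (\<lambda>t. conv \<phi> (kernel_eps g \<epsilon>) (t + \<epsilon>) - c * \<epsilon>)"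
    if "0 < \<epsilon>" "\<epsilon> < \<delta>\<^sup>2 / 8" for \<epsilon>
  proof -
    have "Wplus (M / (1 - \<delta>) / (1 - \<delta>)) (\<lambda>t. kernel_average g \<phi> \<epsilon> (t + \<epsilon>) - c * \<epsilon>)"
    proof (rule Wplus_shift)
      show "concave_on UNIV (kernel_average g \<phi> \<epsilon>)" "mono (kernel_average g \<phi> \<epsilon>)"
        by (rule concave_on_kernel_average[OF g cont ccv], rule mono_kernel_average[OF g cont mon])
      show "Wplus (M / (1 - \<delta>)) (kernel_average g \<phi> \<epsilon>)"
        using W_av that by simp
      show "\<forall>t\<ge>- (\<delta> - \<epsilon>). kernel_average g \<phi> \<epsilon> t = c * t"
        using kernel_average_linear_tail[OF g lin] \<open>0 < \<epsilon>\<close> by simp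
      show "1 \<le> M / (1 - \<delta>)"
        using assms by (simp add: le_divide_eq)
    qed (use assms that in simp_all)
    then show ?thesis
      by (simp add: power2_eq_square conv[OF that(1)])
  qed
  moreover have "\<phi> t - c * \<epsilon> \<le> conv \<phi> (kernel_eps g \<epsilon>) (t + \<epsilon>) - c * \<epsilon>" if "0 < \<epsilon>" for \<epsilon> t
    using kernel_average_shift_ge[OF g cont mon, of \<epsilon> t] that by (simp add: conv[OF that])
  ultimately show ?thesis
    using conv_kernel_eps_shift_uniform_limit[OF g cont] by blast
qed

theorem lemma2p5:
  fixes c \<delta> M :: real and \<phi> g :: "real \<Rightarrow> real"
  assumes c_pos: "c > 0" and delta: "0 < \<delta>" "\<delta> < 1" and M: "M \<ge> 1"
    and chi_lin: "\<forall>t\<ge>-\<delta>. \<phi> t = c * t"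
    and chi_class: "Wminus_tilde \<phi> \<or> Wplus M \<phi>"
    and g_smooth: "smooth_real g"
    and g_supp: "\<forall>t. \<bar>t\<bar> > 1 \<longrightarrow> g t = 0"
    and g_even: "\<forall>t. g t = g (- t)"
    and g_bounds: "\<forall>t. 0 \<le> g t \<and> g t \<le> 1"
    and g_int: "(g has_integral 1) UNIV"
  shows
    "(Wminus_tilde \<phi> \<longrightarrow>
        (\<forall>\<epsilon>. 0 < \<epsilon> \<and> \<epsilon> < \<delta> \<longrightarrow> Wminus_tilde (conv \<phi> (kernel_eps g \<epsilon>)))
      \<and> (\<forall>t. (\<forall>\<epsilon>1 \<epsilon>2. 0 < \<epsilon>1 \<and> \<epsilon>1 \<le> \<epsilon>2 \<longrightarrow>
                 conv \<phi> (kernel_eps g \<epsilon>1) t \<le> conv \<phi> (kernel_eps g \<epsilon>2) t)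
             \<and> ((\<lambda>\<epsilon>. conv \<phi> (kernel_eps g \<epsilon>) t) \<longlongrightarrow> \<phi> t) (at_right 0))
      \<and> (\<forall>\<epsilon>>0. \<forall>t. conv \<phi> (kernel_eps g \<epsilon>) t - \<phi> t \<le> c * \<epsilon>))
   \<and> (Wplus M \<phi> \<longrightarrow>
        (\<forall>\<epsilon>. 0 < \<epsilon> \<and> \<epsilon> < \<delta>\<^sup>2 / 2 \<longrightarrow>
               Wplus (M / (1 - \<delta>)) (conv \<phi> (kernel_eps g \<epsilon>)))
      \<and> (\<forall>\<epsilon>. 0 < \<epsilon> \<and> \<epsilon> < \<delta>\<^sup>2 / 8 \<longrightarrow>
               Wplus (M / (1 - \<delta>)\<^sup>2) (\<lambda>t. conv \<phi> (kernel_eps g \<epsilon>) (t + \<epsilon>) - c * \<epsilon>)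
             \<and> (\<forall>t. conv \<phi> (kernel_eps g \<epsilon>) (t + \<epsilon>) - c * \<epsilon> \<ge> \<phi> t - c * \<epsilon>))
      \<and> (\<forall>K. compact K \<longrightarrow>
             uniform_limit K (\<lambda>\<epsilon> t. conv \<phi> (kernel_eps g \<epsilon>) (t + \<epsilon>) - c * \<epsilon>) \<phi> (at_right 0)))"
proof -
  have g: "mollifier_kernel g"
    using g_smooth g_supp g_even g_bounds g_int by (intro mollifier_kernelI) auto
  show ?thesis
    using mollify_Wminus_tilde[OF g _ chi_lin c_pos delta(1)] mollify_Wplus[OF g _ chi_lin c_pos delta M]
    by blast
qed

end
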